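(* Let $V$ be a finite set with positive element weights ($\vert A \vert$ = total weight of $A \subseteq V$), and let $\mathcal{P}, \mathcal{P}'$ be partitions of $V$ into nonempty parts. If an optimal $C_{\mathcal{P}}$-correspondence $(\mathcal{S}, \mathcal{S}')$ is not mutual, then $\vert \mathcal{S} \vert \in \{1, \vert \mathcal{P} \vert - 1\}$ or $\vert \mathcal{S}' \vert \in \{1, \vert \mathcal{P}' \vert - 1\}$.
   Context: For $\mathcal{S}$ a set of subsets of $V$, $U_{\mathcal{S}}$ is their union. A correspondence is a pair $(\mathcal{S}, \mathcal{S}')$ with $\mathcal{S} \subseteq \mathcal{P}$, $\mathcal{S}' \subseteq \mathcal{P}'$, with cost $\vert U_{\mathcal{S}} \triangle U_{\mathcal{S}'} \vert$. A $C_{\mathcal{P}}$-correspondence is one with $\mathcal{S} \notin \{\emptyset, \mathcal{P}\}$; it is optimal if its cost is minimum among all $C_{\mathcal{P}}$-correspondences. A correspondence is mutual if (1) $\vert P \cap U_{\mathcal{S}'} \vert \ge \vert P \vert/2$ for all $P \in \mathcal{S}$, (2) $\vert P \cap U_{\mathcal{S}'} \vert \le \vert P \vert/2$ for all $P \in \mathcal{P} \setminus \mathcal{S}$, (3) $\vert P' \cap U_{\mathcal{S}} \vert \ge \vert P' \vert/2$ for all $P' \in \mathcal{S}'$, and (4) $\vert P' \cap U_{\mathcal{S}} \vert \le \vert P' \vert/2$ for all $P' \in \mathcal{P}' \setminus \mathcal{S}'$. *)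

theory Defs
  imports Complex_Main
begin

definition wt :: "('a \<Rightarrow> real) \<Rightarrow> 'a set \<Rightarrow> real" where
  "wt w A = (\<Sum>x\<in>A. w x)"

definition is_partition :: "'a set \<Rightarrow> 'a set set \<Rightarrow> bool" where
  "is_partition V P \<longleftrightarrow> \<Union>P = V \<and> {} \<notin> P \<and>
     (\<forall>A\<in>P. \<forall>B\<in>P. A \<noteq> B \<longrightarrow> A \<inter> B = {})"

definition corr_cost :: "('a \<Rightarrow> real) \<Rightarrow> 'a set set \<Rightarrow> 'a set set \<Rightarrow> real" where
  "corr_cost w S S' = wt w ((\<Union>S - \<Union>S') \<union> (\<Union>S' - \<Union>S))"

definition is_CP_corr :: "'a set set \<Rightarrow> 'a set set \<Rightarrow> 'a set set \<Rightarrow> 'a set set \<Rightarrow> bool" where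
  "is_CP_corr P P' S S' \<longleftrightarrow> S \<subseteq> P \<and> S' \<subseteq> P' \<and> S \<noteq> {} \<and> S \<noteq> P"

definition optimal_CP_corr ::
  "('a \<Rightarrow> real) \<Rightarrow> 'a set set \<Rightarrow> 'a set set \<Rightarrow> 'a set set \<Rightarrow> 'a set set \<Rightarrow> bool" where
  "optimal_CP_corr w P P' S S' \<longleftrightarrow> is_CP_corr P P' S S' \<and>
     (\<forall>T T'. is_CP_corr P P' T T' \<longrightarrow> corr_cost w S S' \<le> corr_cost w T T')"

definition mutual ::
  "('a \<Rightarrow> real) \<Rightarrow> 'a set set \<Rightarrow> 'a set set \<Rightarrow> 'a set set \<Rightarrow> 'a set set \<Rightarrow> bool" where
  "mutual w P P' S S' \<longleftrightarrow>
     (\<forall>A\<in>S. wt w (A \<inter> \<Union>S') \<ge> wt w A / 2) \<and>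
     (\<forall>A\<in>P - S. wt w (A \<inter> \<Union>S') \<le> wt w A / 2) \<and>
     (\<forall>B\<in>S'. wt w (B \<inter> \<Union>S) \<ge> wt w B / 2) \<and>
     (\<forall>B\<in>P' - S'. wt w (B \<inter> \<Union>S) \<le> wt w B / 2)"

end

theory Submission
  imports Defs
begin

text \<open>Moving a single part A into or out of one side of a correspondence changes its cost by
  |A| - 2|A \<inter> U|, where U is the union on the other side. An optimal C_P-correspondence cannot be
  improved by such a move, which is exactly one of the four mutuality inequalities for A.
  On the side of P' every move stays a C_P-correspondence; on the side of P a move is forbidden
  only when it would make S empty or all of P, i.e. only when |S| = 1 or |S| = |P| - 1.\<close>

lemma wt_Un_disjoint:
  "finite A \<Longrightarrow> finite B \<Longrightarrow> A \<inter> B = {} \<Longrightarrow> wt w (A \<union> B) = wt w A + wt w B"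
  unfolding wt_def by (rule sum.union_disjoint)

lemma wt_Int_Diff_split:
  "finite A \<Longrightarrow> wt w A = wt w (A \<inter> B) + wt w (A - B)"
  using wt_Un_disjoint[of "A \<inter> B" "A - B" w] by (simp add: Int_Diff_Un Int_Diff_disjoint)

lemma wt_sym_diff_Un_disjoint:
  assumes "finite U" "finite U'" "finite A" "A \<inter> U = {}"
  shows "wt w (sym_diff (U \<union> A) U') = wt w (sym_diff U U') + wt w A - 2 * wt w (A \<inter> U')"
proof -
  let ?D = "sym_diff U U'"
  have fin: "finite ?D" using assms(1,2) by simp
  have D_Int_A: "?D \<inter> A = A \<inter> U'" using assms(4) by auto
  have "sym_diff (U \<union> A) U' = (?D - A) \<union> (A - U')"
    using assms(4) by auto
  moreover have "(?D - A) \<inter> (A - U') = {}" by auto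
  ultimately have "wt w (sym_diff (U \<union> A) U') = wt w (?D - A) + wt w (A - U')"
    using fin assms(3) wt_Un_disjoint[of "?D - A" "A - U'" w] by simp
  moreover have "wt w ?D = wt w (?D - A) + wt w (A \<inter> U')"
    using wt_Int_Diff_split[OF fin, of w A] D_Int_A by simp
  moreover have "wt w A = wt w (A \<inter> U') + wt w (A - U')"
    using wt_Int_Diff_split[OF assms(3)] .
  ultimately show ?thesis by linarith
qed

lemma partition_Union_subset:
  "is_partition V P \<Longrightarrow> S \<subseteq> P \<Longrightarrow> \<Union>S \<subseteq> V"
  unfolding is_partition_def by blast

lemma finite_partition:
  "finite V \<Longrightarrow> is_partition V P \<Longrightarrow> finite P"
  unfolding is_partition_def by (metis finite_UnionD)

lemma partition_part_disjoint_Union: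
  assumes "is_partition V P" "S \<subseteq> P" "A \<in> P - S"
  shows "A \<inter> \<Union>S = {}"
proof -
  have "A \<inter> B = {}" if "B \<in> S" for B
    using assms that unfolding is_partition_def by (metis DiffE subsetD)
  then show ?thesis by auto
qed

lemma corr_cost_commute: "corr_cost w S S' = corr_cost w S' S"
  unfolding corr_cost_def by (simp add: Un_commute)

lemma corr_cost_insert:
  assumes "finite V" "is_partition V P" "S \<subseteq> P" "A \<in> P - S" "finite (\<Union>S')"
  shows "corr_cost w (insert A S) S' = corr_cost w S S' + wt w A - 2 * wt w (A \<inter> \<Union>S')"
proof -
  have "\<Union>S \<subseteq> V" "A \<subseteq> V"
    using assms(2-4) partition_Union_subset[of V P] by auto
  then have "finite (\<Union>S)" "finite A"
    using assms(1) by (auto intro: finite_subset)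
  with assms(5) show ?thesis
    unfolding corr_cost_def Union_insert Un_commute[of A]
    by (intro wt_sym_diff_Un_disjoint partition_part_disjoint_Union[OF assms(2-4)])
qed

lemma corr_cost_remove:
  assumes "finite V" "is_partition V P" "S \<subseteq> P" "A \<in> S" "finite (\<Union>S')"
  shows "corr_cost w S S' = corr_cost w (S - {A}) S' + wt w A - 2 * wt w (A \<inter> \<Union>S')"
proof -
  have "insert A (S - {A}) = S" using assms(4) by blast
  then show ?thesis
    using corr_cost_insert[OF assms(1,2), of "S - {A}" A S' w] assms(3-5) by auto
qed

lemma optimal_CP_corrD:
  assumes "optimal_CP_corr w P P' S S'"
  shows "S \<subseteq> P" "S' \<subseteq> P'" "S \<noteq> {}" "S \<noteq> P"
    and "\<And>T T'. is_CP_corr P P' T T' \<Longrightarrow> corr_cost w S S' \<le> corr_cost w T T'"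
  using assms unfolding optimal_CP_corr_def is_CP_corr_def by auto

lemma optimal_CP_corr_insert:
  assumes "finite V" "is_partition V P" "is_partition V P'" "optimal_CP_corr w P P' S S'"
    and "A \<in> P - S" "insert A S \<noteq> P"
  shows "wt w (A \<inter> \<Union>S') \<le> wt w A / 2"
proof -
  note opt = optimal_CP_corrD[OF assms(4)]
  have "is_CP_corr P P' (insert A S) S'"
    unfolding is_CP_corr_def using opt(1,2) assms(5,6) by auto
  then have "corr_cost w S S' \<le> corr_cost w (insert A S) S'"
    by (rule opt(5))
  moreover have fin: "finite (\<Union>S')"
    by (rule finite_subset[OF partition_Union_subset[OF assms(3) opt(2)] assms(1)])
  ultimately show ?thesis
    using corr_cost_insert[OF assms(1,2) opt(1) assms(5) fin, of w] by linarith
qed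

lemma optimal_CP_corr_remove:
  assumes "finite V" "is_partition V P" "is_partition V P'" "optimal_CP_corr w P P' S S'"
    and "A \<in> S" "S - {A} \<noteq> {}"
  shows "wt w (A \<inter> \<Union>S') \<ge> wt w A / 2"
proof -
  note opt = optimal_CP_corrD[OF assms(4)]
  have "is_CP_corr P P' (S - {A}) S'"
    unfolding is_CP_corr_def using opt(1,2,4) assms(6) by auto
  then have "corr_cost w S S' \<le> corr_cost w (S - {A}) S'"
    by (rule opt(5))
  moreover have fin: "finite (\<Union>S')"
    by (rule finite_subset[OF partition_Union_subset[OF assms(3) opt(2)] assms(1)])
  ultimately show ?thesis
    using corr_cost_remove[OF assms(1,2) opt(1) assms(5) fin, of w] by linarith
qed

lemma optimal_CP_corr_insert_right:
  assumes "finite V" "is_partition V P" "is_partition V P'" "optimal_CP_corr w P P' S S'"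
    and "B \<in> P' - S'"
  shows "wt w (B \<inter> \<Union>S) \<le> wt w B / 2"
proof -
  note opt = optimal_CP_corrD[OF assms(4)]
  have "is_CP_corr P P' S (insert B S')"
    unfolding is_CP_corr_def using opt(1-4) assms(5) by auto
  then have "corr_cost w S' S \<le> corr_cost w (insert B S') S"
    using opt(5) by (simp only: corr_cost_commute)
  moreover have fin: "finite (\<Union>S)"
    by (rule finite_subset[OF partition_Union_subset[OF assms(2) opt(1)] assms(1)])
  ultimately show ?thesis
    using corr_cost_insert[OF assms(1,3) opt(2) assms(5) fin, of w] by linarith
qed

lemma optimal_CP_corr_remove_right:
  assumes "finite V" "is_partition V P" "is_partition V P'" "optimal_CP_corr w P P' S S'"
    and "B \<in> S'"
  shows "wt w (B \<inter> \<Union>S) \<ge> wt w B / 2"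
proof -
  note opt = optimal_CP_corrD[OF assms(4)]
  have "is_CP_corr P P' S (S' - {B})"
    unfolding is_CP_corr_def using opt(1-4) by auto
  then have "corr_cost w S' S \<le> corr_cost w (S' - {B}) S"
    using opt(5) by (simp only: corr_cost_commute)
  moreover have fin: "finite (\<Union>S)"
    by (rule finite_subset[OF partition_Union_subset[OF assms(2) opt(1)] assms(1)])
  ultimately show ?thesis
    using corr_cost_remove[OF assms(1,3) opt(2) assms(5) fin, of w] by linarith
qed

theorem proposition11:
  fixes V :: "'a set" and w :: "'a \<Rightarrow> real" and P P' S S' :: "'a set set"
  assumes "finite V"
    and "\<forall>x\<in>V. w x > 0"
    and "is_partition V P"
    and "is_partition V P'"
    and "optimal_CP_corr w P P' S S'"
    and "\<not> mutual w P P' S S'"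
  shows "card S \<in> {1, card P - 1} \<or> card S' \<in> {1, card P' - 1}"
proof (rule ccontr)
  assume "\<not> ?thesis"
  then have card_S: "card S \<noteq> 1" "card S \<noteq> card P - 1" by auto
  have fin_S: "finite S"
    by (rule finite_subset[OF optimal_CP_corrD(1)[OF assms(5)] finite_partition[OF assms(1,3)]])
  have "S - {A} \<noteq> {}" if "A \<in> S" for A
  proof
    assume "S - {A} = {}"
    with that have "S = {A}" by auto
    with card_S(1) show False by simp
  qed
  moreover have "insert A S \<noteq> P" if "A \<in> P - S" for A
  proof
    assume "insert A S = P"
    with that card_insert_disjoint[OF fin_S] have "card P = Suc (card S)" by force
    with card_S(2) show False by simp
  qed
  ultimately have "mutual w P P' S S'"
    unfolding mutual_def
    by (intro conjI ballI optimal_CP_corr_remove[OF assms(1,3,4,5)]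
        optimal_CP_corr_insert[OF assms(1,3,4,5)] optimal_CP_corr_remove_right[OF assms(1,3,4,5)]
        optimal_CP_corr_insert_right[OF assms(1,3,4,5)]) auto
  with assms(6) show False by contradiction
qed

end
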